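(* Let $A=[0,+\infty)^n$ and let $\mathcal{O}$ be a bounded open neighbourhood of the origin in $\mathbb{R}^n$. There is no continuous map $F:\partial\mathcal{O}\cap A\to A$ such that $F(\partial\mathcal{O}\cap A)\subset\partial A\setminus\{0\}$ and such that, for every $j=1,\dots,n$ and every $x=(x_1,\dots,x_n)\in\partial\mathcal{O}\cap A$, $x_j=0$ implies $F_j(x)=0$, where $F_j$ denotes the $j$-th component of $F$.
   Context: $\partial A$ is the boundary of $A$ in $\mathbb{R}^n$, i.e. the set of points of $A$ having at least one zero coordinate. *)

theory Defs
  imports "HOL-Analysis.Analysis"
begin

definition orthant :: "(real ^ 'n) set" where
  "orthant = {x. \<forall>i. 0 \<le> x $ i}"

text \<open>Its boundary in R^n: points of A with at least one zero coordinate.\<close>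
definition orthant_boundary :: "(real ^ 'n) set" where
  "orthant_boundary = {x \<in> orthant. \<exists>i. x $ i = 0}"

end

theory Submission
  imports Defs
begin

text \<open>Reflecting by coordinatewise absolute values, let W be the
preimage of the neighbourhood under x \<mapsto> \<bar>x\<bar> and put H x = x \<cdot> F \<bar>x\<bar> (coordinatewise product) on
the frontier of W. The straight-line homotopy from the identity to H avoids 0, because
F \<bar>x\<bar> \<ge> 0 and F \<bar>x\<bar> has a nonzero coordinate where x does too; the one from H to the constant
(-1,\<dots>,-1) avoids 0, because H x vanishes in a coordinate where F \<bar>x\<bar> does. So the inclusion of
the frontier of a bounded open neighbourhood of 0 into R^n - {0} would be nullhomotopic,
contradicting Borsuk's theorem.\<close>

definition vec_abs :: "real ^ 'n \<Rightarrow> real ^ 'n" where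
  "vec_abs x = (\<chi> i. \<bar>x $ i\<bar>)"

lemma continuous_on_vec_abs: "continuous_on S vec_abs"
  unfolding vec_abs_def by (intro continuous_intros)

lemma norm_vec_abs [simp]: "norm (vec_abs x) = norm x"
  by (simp add: vec_abs_def norm_vec_def)

lemma vec_abs_nth_eq_0_iff [simp]: "vec_abs x $ i = 0 \<longleftrightarrow> x $ i = 0"
  by (simp add: vec_abs_def)

lemma vec_abs_0 [simp]: "vec_abs 0 = 0"
  by (simp add: vec_abs_def vec_eq_iff)

lemma vec_abs_in_orthant: "vec_abs x \<in> orthant"
  by (simp add: orthant_def vec_abs_def)

lemma frontier_vimage_subset:
  assumes "continuous_on UNIV f" and "open U"
  shows "frontier (f -` U) \<subseteq> f -` frontier U"
proof -
  have "closed (f -` closure U)"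
    using assms(1) by (intro closed_vimage) auto
  moreover have "f -` U \<subseteq> f -` closure U"
    using closure_subset by blast
  ultimately have "closure (f -` U) \<subseteq> f -` closure U"
    by (rule closure_minimal[rotated])
  moreover have "open (f -` U)"
    using assms by (intro open_vimage) auto
  ultimately show ?thesis
    using assms(2) by (auto simp: frontier_def interior_open)
qed

lemma bounded_vimage_vec_abs:
  assumes "bounded U"
  shows "bounded (vec_abs -` U)"
proof -
  obtain B where "\<forall>y\<in>U. norm y \<le> B"
    using assms bounded_iff by blast
  then have "\<forall>x\<in>vec_abs -` U. norm x \<le> B"
    by (metis norm_vec_abs vimageE)
  then show ?thesis
    using bounded_iff by blast
qed

lemma connected_component_compl_frontier_subset:
  fixes W :: "'a::topological_space set"
  assumes "a \<in> W" and "a \<notin> frontier W"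
  shows "connected_component_set (- frontier W) a \<subseteq> W"
proof (rule ccontr)
  let ?C = "connected_component_set (- frontier W) a"
  assume "\<not> ?C \<subseteq> W"
  moreover have "a \<in> ?C"
    using assms(2) by simp
  ultimately have "?C \<inter> frontier W \<noteq> {}"
    using assms(1) connected_Int_frontier connected_connected_component by blast
  then show False
    using connected_component_subset by blast
qed

lemma frontier_inclusion_not_nullhomotopic:
  fixes W :: "'a::euclidean_space set"
  assumes "open W" and "bounded W" and "0 \<in> W"
  shows "\<not> homotopic_with_canon (\<lambda>x. True) (frontier W) (- {0}) (\<lambda>x. x) (\<lambda>x. c)"
proof
  assume hom: "homotopic_with_canon (\<lambda>x. True) (frontier W) (- {0}) (\<lambda>x. x) (\<lambda>x. c)"
  define nz where "nz y = inverse (norm y) *\<^sub>R y" for y :: 'a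
  have "homotopic_with_canon (\<lambda>x. True) (frontier W) (sphere 0 1) (nz \<circ> (\<lambda>x. x)) (nz \<circ> (\<lambda>x. c))"
  proof (rule homotopic_with_compose_continuous_left[OF hom])
    show "continuous_on (- {0}) nz"
      unfolding nz_def by (intro continuous_intros) auto
  qed (auto simp: nz_def)
  then have "\<exists>c. homotopic_with_canon (\<lambda>x. True) (frontier W) (sphere 0 1)
                 (\<lambda>x. inverse (norm (x - 0)) *\<^sub>R (x - 0)) (\<lambda>x. c)"
    by (auto simp: nz_def o_def)
  moreover have "0 \<notin> frontier W"
    using assms(1,3) by (simp add: frontier_def interior_open)
  moreover have "bounded (connected_component_set (- frontier W) 0)"
    using connected_component_compl_frontier_subset[OF assms(3)] \<open>0 \<notin> frontier W\<close> assms(2)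
      bounded_subset by blast
  ultimately show False
    using Borsuk_map_essential_bounded_component assms(2) compact_frontier_bounded by blast
qed

lemma zero_notin_segment_to_scaled:
  fixes x g :: "real ^ 'n"
  assumes "x \<noteq> 0" and "\<And>i. 0 \<le> g $ i" and "g $ j \<noteq> 0" and "x $ j \<noteq> 0"
  shows "0 \<notin> closed_segment x (\<chi> i. x $ i * g $ i)"
proof
  assume "0 \<in> closed_segment x (\<chi> i. x $ i * g $ i)"
  then obtain t where t: "0 \<le> t" "t \<le> 1"
    and zero: "\<And>i. x $ i * ((1 - t) + t * g $ i) = 0"
    by (auto simp: closed_segment_def vec_eq_iff algebra_simps)
  show False
  proof (cases "t = 1")
    case True
    then show False
      using zero[of j] assms(3,4) by simp
  next
    case False
    have "x $ i = 0" for i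
    proof -
      have "0 < (1 - t) + t * g $ i"
        using False t assms(2)[of i] by (smt (verit) mult_nonneg_nonneg)
      then show ?thesis
        using zero[of i] by simp
    qed
    then show False
      using assms(1) by (simp add: vec_eq_iff)
  qed
qed

lemma zero_notin_segment_coordinate:
  fixes y c :: "real ^ 'n"
  assumes "y \<noteq> 0" and "y $ j = 0" and "c $ j \<noteq> 0"
  shows "0 \<notin> closed_segment y c"
proof
  assume "0 \<in> closed_segment y c"
  then obtain t where zero: "(1 - t) *\<^sub>R y + t *\<^sub>R c = 0"
    by (auto simp: closed_segment_def)
  then have "((1 - t) *\<^sub>R y + t *\<^sub>R c) $ j = 0"
    by simp
  then have "t = 0"
    using assms(2,3) by simp
  then show False
    using zero assms(1) by simp
qed

lemma inclusion_homotopic_neg_one_if_boundary_map: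
  fixes S :: "(real ^ 'n) set" and G :: "real ^ 'n \<Rightarrow> real ^ 'n"
  assumes "continuous_on S G" and "0 \<notin> S"
    and image: "G ` S \<subseteq> orthant_boundary - {0}"
    and zeros: "\<And>x j. x \<in> S \<Longrightarrow> x $ j = 0 \<Longrightarrow> G x $ j = 0"
  shows "homotopic_with_canon (\<lambda>x. True) S (- {0}) (\<lambda>x. x) (\<lambda>x. - (\<chi> i. 1))"
proof -
  define H where "H x = (\<chi> i. x $ i * G x $ i)" for x
  have contH: "continuous_on S H"
    unfolding H_def using assms(1) by (intro continuous_intros) auto
  have support: "\<exists>j. G x $ j \<noteq> 0 \<and> x $ j \<noteq> 0" if "x \<in> S" for x
  proof -
    have "G x \<noteq> 0"
      using image that by blast
    then obtain j where "G x $ j \<noteq> 0"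
      by (auto simp: vec_eq_iff)
    then show ?thesis
      using zeros that by blast
  qed
  have to_H: "homotopic_with_canon (\<lambda>x. True) S (- {0}) (\<lambda>x. x) H"
  proof (rule homotopic_with_linear[OF continuous_on_id contH])
    fix x assume "x \<in> S"
    then obtain j where "G x $ j \<noteq> 0" "x $ j \<noteq> 0"
      using support by blast
    moreover have "0 \<le> G x $ i" for i
      using image \<open>x \<in> S\<close> by (auto simp: orthant_boundary_def orthant_def)
    ultimately show "closed_segment x (H x) \<subseteq> - {0}"
      using zero_notin_segment_to_scaled[of x "G x" j] \<open>x \<in> S\<close> assms(2)
      unfolding H_def by blast
  qed
  have from_H: "homotopic_with_canon (\<lambda>x. True) S (- {0}) H (\<lambda>x. - (\<chi> i. 1))"
  proof (rule homotopic_with_linear[OF contH continuous_on_const])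
    fix x assume "x \<in> S"
    then obtain j where "H x $ j = 0"
      using image by (auto simp: H_def orthant_boundary_def)
    moreover have "H x \<noteq> 0"
      using support[OF \<open>x \<in> S\<close>] by (auto simp: H_def vec_eq_iff)
    ultimately show "closed_segment (H x) (- (\<chi> i. 1)) \<subseteq> - {0}"
      using zero_notin_segment_coordinate[of "H x" j] by auto
  qed
  show ?thesis
    using homotopic_with_trans[OF to_H from_H] .
qed

theorem lemma3p1:
  fixes U :: "(real ^ 'n) set"
  assumes "open U" and "bounded U" and "0 \<in> U"
  shows "\<not> (\<exists>F :: real ^ 'n \<Rightarrow> real ^ 'n.
              continuous_on (frontier U \<inter> orthant) F \<and>
              F ` (frontier U \<inter> orthant) \<subseteq> orthant_boundary - {0} \<and>
              (\<forall>j. \<forall>x \<in> frontier U \<inter> orthant. x $ j = 0 \<longrightarrow> F x $ j = 0))"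
proof
  assume "\<exists>F :: real ^ 'n \<Rightarrow> real ^ 'n.
              continuous_on (frontier U \<inter> orthant) F \<and>
              F ` (frontier U \<inter> orthant) \<subseteq> orthant_boundary - {0} \<and>
              (\<forall>j. \<forall>x \<in> frontier U \<inter> orthant. x $ j = 0 \<longrightarrow> F x $ j = 0)"
  then obtain F :: "real ^ 'n \<Rightarrow> real ^ 'n" where
    contF: "continuous_on (frontier U \<inter> orthant) F" and
    imF: "F ` (frontier U \<inter> orthant) \<subseteq> orthant_boundary - {0}" and
    zeroF: "\<forall>j. \<forall>x \<in> frontier U \<inter> orthant. x $ j = 0 \<longrightarrow> F x $ j = 0"
    by blast
  define W where "W = vec_abs -` U"
  have W: "open W" "bounded W" "0 \<in> W"
    using assms continuous_on_vec_abs bounded_vimage_vec_abs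
    by (auto simp: W_def intro: open_vimage)
  have reflect: "vec_abs ` frontier W \<subseteq> frontier U \<inter> orthant"
    using frontier_vimage_subset[OF continuous_on_vec_abs \<open>open U\<close>] vec_abs_in_orthant
    by (auto simp: W_def)
  have "homotopic_with_canon (\<lambda>x. True) (frontier W) (- {0}) (\<lambda>x. x) (\<lambda>x. - (\<chi> i. 1))"
  proof (rule inclusion_homotopic_neg_one_if_boundary_map)
    show "continuous_on (frontier W) (F \<circ> vec_abs)"
      by (intro continuous_on_compose continuous_on_vec_abs continuous_on_subset[OF contF reflect])
    show "0 \<notin> frontier W"
      using W by (simp add: frontier_def interior_open)
  qed (use imF zeroF reflect in fastforce)+
  then show False
    using frontier_inclusion_not_nullhomotopic[OF W] by blast
qed

end
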